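(* For all $X_n,Y_n\in\mathcal{T}^N$, $$D_{T,L^2}(\hat\mu_n(X_n),\hat\mu_n(Y_n))^2\le\frac{b^2}{N}\sum_{k\in I_n}\|X^k-Y^k\|_{L^2}^2,$$ where $\|x\|_{L^2}^2=\int_0^T x_t^2\,dt$.
   Context: $T>0$, $f:\mathbb{R}\to[0,1]$ Lipschitz with constant $1$, $\mathcal{T}=C([0,T],\mathbb{R})$. $(b_i)_{i\in\mathbb{Z}}$ is a positive summable sequence and $b=\sum_{i\in\mathbb{Z}}b_i$. For $n\ge0$, $I_n=\{-n,\dots,n\}$, $N=2n+1$. Shifts $(S^iu)^j=u^{i+j}$ on $\mathcal{T}^{\mathbb{Z}}$. For $u_n\in\mathcal{T}^N$, $u_{n,p}\in\mathcal{T}^{\mathbb{Z}}$ is the periodic extension, $u_{n,p}^j=u_n^{j\bmod I_n}$ (with $j\bmod I_n$ the element of $I_n$ congruent to $j$ mod $N$), and $\hat\mu_n(u_n)=\frac1N\sum_{i\in I_n}\delta_{S^iu_{n,p}}$. $d_{L^2}(u,v)=\sum_{i\in\mathbb{Z}}b_i\|f(u^i)-f(v^i)\|_{L^2}$ on $\mathcal{T}^{\mathbb{Z}}$ and $D_{T,L^2}(\mu,\nu)=\inf_\xi\int d_{L^2}(u,v)\,d\xi(u,v)$, infimum over couplings $\xi$ of $\mu$ and $\nu$. *)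

theory Defs
  imports "HOL-Probability.Probability"
begin

text \<open>The path space C([0,T],R), represented canonically by functions that are
  continuous on [0,T] and vanish outside [0,T].\<close>
definition CT :: "real \<Rightarrow> (real \<Rightarrow> real) set" where
  "CT T = {x. continuous_on {0..T} x \<and> (\<forall>t. t \<notin> {0..T} \<longrightarrow> x t = 0)}"

text \<open>Measurable structure on C([0,T]): sigma-algebra generated by the evaluations
  (which is the Borel sigma-algebra of the sup norm).\<close>
definition CTM :: "real \<Rightarrow> (real \<Rightarrow> real) measure" where
  "CTM T = restrict_space (PiM UNIV (\<lambda>_::real. (borel :: real measure))) (CT T)"

definition TZ :: "real \<Rightarrow> (int \<Rightarrow> real \<Rightarrow> real) measure" where
  "TZ T = PiM UNIV (\<lambda>_::int. CTM T)"

definition l2norm :: "real \<Rightarrow> (real \<Rightarrow> real) \<Rightarrow> real" where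
  "l2norm T x = sqrt (integral {0..T} (\<lambda>t. (x t)^2))"

definition dL2 :: "real \<Rightarrow> (real \<Rightarrow> real) \<Rightarrow> (int \<Rightarrow> real)
    \<Rightarrow> (int \<Rightarrow> real \<Rightarrow> real) \<Rightarrow> (int \<Rightarrow> real \<Rightarrow> real) \<Rightarrow> real" where
  "dL2 T f bs u v = (\<Sum>\<^sub>\<infinity>i\<in>UNIV. bs i * l2norm T (\<lambda>t. f (u i t) - f (v i t)))"

definition coupling :: "'a measure \<Rightarrow> 'a measure \<Rightarrow> 'a measure \<Rightarrow> ('a \<times> 'a) measure \<Rightarrow> bool" where
  "coupling M \<mu> \<nu> \<xi> \<longleftrightarrow> sets \<xi> = sets (M \<Otimes>\<^sub>M M) \<and> prob_space \<xi>
     \<and> distr \<xi> M fst = \<mu> \<and> distr \<xi> M snd = \<nu>"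

definition DTL2 :: "real \<Rightarrow> (real \<Rightarrow> real) \<Rightarrow> (int \<Rightarrow> real)
    \<Rightarrow> (int \<Rightarrow> real \<Rightarrow> real) measure \<Rightarrow> (int \<Rightarrow> real \<Rightarrow> real) measure \<Rightarrow> ennreal" where
  "DTL2 T f bs \<mu> \<nu> = Inf {(\<integral>\<^sup>+ p. ennreal (dL2 T f bs (fst p) (snd p)) \<partial>\<xi>) | \<xi>. coupling (TZ T) \<mu> \<nu> \<xi>}"

definition shift :: "int \<Rightarrow> (int \<Rightarrow> 'a) \<Rightarrow> (int \<Rightarrow> 'a)" where
  "shift i u = (\<lambda>j. u (i + j))"

definition modI :: "nat \<Rightarrow> int \<Rightarrow> int" where
  "modI n j = (j + int n) mod (2 * int n + 1) - int n"

definition perext :: "nat \<Rightarrow> (int \<Rightarrow> 'a) \<Rightarrow> (int \<Rightarrow> 'a)" where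
  "perext n u = (\<lambda>j. u (modI n j))"

definition empirical :: "real \<Rightarrow> nat \<Rightarrow> (int \<Rightarrow> real \<Rightarrow> real) \<Rightarrow> (int \<Rightarrow> real \<Rightarrow> real) measure" where
  "empirical T n u = measure_of (space (TZ T)) (sets (TZ T))
     (\<lambda>A. (\<Sum>i\<in>{- int n..int n}. indicator A (shift i (perext n u))) / ennreal (real (2 * n + 1)))"

end

theory Submission
  imports Defs
begin

text \<open>Couple the two empirical measures diagonally, pairing the atom \<open>S^i X_p\<close> with
  \<open>S^i Y_p\<close> (each of mass \<open>1/N\<close>). Then \<open>D_T,L2\<close> is at most the average over \<open>i\<close> of
  \<open>\<Sum>_j b_j ||f(X^(i+j)) - f(Y^(i+j))||\<close>, indices taken mod \<open>I_n\<close>. As \<open>f\<close> is 1-Lipschitz and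
  a full period of \<open>i\<close> visits every \<open>k\<close> in \<open>I_n\<close> exactly once, this is at most
  \<open>(b/N) \<Sum>_k ||X^k - Y^k||\<close>, and Cauchy-Schwarz gives the bound on the square.\<close>

lemma has_sum_sum:
  fixes f :: "'i \<Rightarrow> 'a \<Rightarrow> 'b::topological_comm_monoid_add"
  assumes "finite I" "\<And>i. i \<in> I \<Longrightarrow> (f i has_sum s i) A"
  shows "((\<lambda>x. \<Sum>i\<in>I. f i x) has_sum (\<Sum>i\<in>I. s i)) A"
  using assms by (induction I rule: finite_induct) (auto intro!: has_sum_add)

lemma infsum_sum:
  fixes f :: "'i \<Rightarrow> 'a \<Rightarrow> 'b::{topological_comm_monoid_add, t2_space}"
  assumes "finite I" "\<And>i. i \<in> I \<Longrightarrow> f i summable_on A"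
  shows "(\<Sum>\<^sub>\<infinity>x\<in>A. \<Sum>i\<in>I. f i x) = (\<Sum>i\<in>I. \<Sum>\<^sub>\<infinity>x\<in>A. f i x)"
  using has_sum_sum[OF assms(1), of f A "\<lambda>i. infsum (f i) A"] assms(2)
  by (simp add: summable_iff_has_sum_infsum infsumI)

text \<open>No measurability of the integrand is needed, because the bound is checked on the
  simple functions below it.\<close>
lemma nn_integral_distr_point_measure_le:
  assumes fin: "finite I" and p: "p \<in> I \<rightarrow> space M"
  shows "(\<integral>\<^sup>+x. g x \<partial>distr (point_measure I w) M p) \<le> (\<Sum>i\<in>I. w i * g (p i))"
  unfolding nn_integral_def
proof (rule SUP_least)
  let ?D = "distr (point_measure I w) M p"
  have p_meas: "p \<in> measurable (point_measure I w) M" using p by simp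
  fix s assume "s \<in> {s. simple_function ?D s \<and> s \<le> g}"
  then have s: "simple_function ?D s" and "s \<le> g" by auto
  have "integral\<^sup>S ?D s = (\<integral>\<^sup>+x. s (p x) \<partial>point_measure I w)"
    using nn_integral_eq_simple_integral[OF s]
      nn_integral_distr[OF p_meas borel_measurable_simple_function[OF s]] by simp
  also have "\<dots> = (\<Sum>i\<in>I. w i * s (p i))"
    using fin by (simp add: nn_integral_point_measure_finite)
  also have "\<dots> \<le> (\<Sum>i\<in>I. w i * g (p i))"
    using \<open>s \<le> g\<close> by (intro sum_mono mult_left_mono) (auto simp: le_fun_def)
  finally show "integral\<^sup>S ?D s \<le> (\<Sum>i\<in>I. w i * g (p i))" .
qed

lemma modI_mem: "modI n j \<in> {- int n..int n}"
  unfolding modI_def by (auto simp: pos_mod_bound[of "2 * int n + 1", simplified])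

lemma modI_eq_self: "i \<in> {- int n..int n} \<Longrightarrow> modI n i = i"
  unfolding modI_def by (auto simp: mod_pos_pos_trivial)

lemma modI_modI_add: "modI n (modI n x + c) = modI n (x + c)"
proof -
  have "(modI n x + c + int n) mod (2 * int n + 1)
      = ((x + int n) mod (2 * int n + 1) + c) mod (2 * int n + 1)"
    unfolding modI_def by (simp add: algebra_simps)
  also have "\<dots> = (x + c + int n) mod (2 * int n + 1)"
    by (metis mod_add_left_eq add.commute add.left_commute)
  finally show ?thesis unfolding modI_def by simp
qed

lemma sum_modI_add:
  "(\<Sum>i\<in>{- int n..int n}. a (modI n (i + j))) = (\<Sum>k\<in>{- int n..int n}. a k)"
proof (rule sum.reindex_bij_witness[where i="\<lambda>k. modI n (k - j)" and j="\<lambda>i. modI n (i + j)"])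
  fix i assume "i \<in> {- int n..int n}"
  then show "modI n (modI n (i + j) - j) = i"
    using modI_modI_add[of n "i + j" "- j"] modI_eq_self[of i n] by simp
next
  fix k assume "k \<in> {- int n..int n}"
  then show "modI n (modI n (k - j) + j) = k"
    using modI_modI_add[of n "k - j" j] modI_eq_self[of k n] by simp
qed (rule modI_mem | rule refl)+

lemma shift_perext_apply: "shift i (perext n u) j = u (modI n (i + j))"
  unfolding shift_def perext_def by simp

lemma space_TZ: "space (TZ T) = {u. \<forall>j. u j \<in> CT T}"
  unfolding TZ_def CTM_def
  by (auto simp: space_PiM space_restrict_space PiE_def extensional_def)

lemma shift_perext_in_space_TZ:
  assumes "\<forall>k\<in>{- int n..int n}. u k \<in> CT T"
  shows "shift i (perext n u) \<in> space (TZ T)"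
  using assms modI_mem by (auto simp: space_TZ shift_perext_apply)

lemma l2norm_nonneg: "0 \<le> l2norm T x"
  unfolding l2norm_def
  by (cases "(\<lambda>t. (x t)^2) integrable_on {0..T}")
     (auto intro!: integral_nonneg simp: not_integrable_integral)

lemma l2norm_lipschitz_le:
  fixes f :: "real \<Rightarrow> real"
  assumes lip: "\<forall>x y. \<bar>f x - f y\<bar> \<le> \<bar>x - y\<bar>" and x: "x \<in> CT T" and y: "y \<in> CT T"
  shows "l2norm T (\<lambda>t. f (x t) - f (y t)) \<le> l2norm T (\<lambda>t. x t - y t)"
proof -
  have "1-lipschitz_on UNIV f" using lip by (intro lipschitz_onI) (auto simp: dist_real_def)
  then have f_cont: "continuous_on UNIV f" by (rule lipschitz_on_continuous_on)
  have x_cont: "continuous_on {0..T} x" and y_cont: "continuous_on {0..T} y"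
    using x y by (auto simp: CT_def)
  have "integral {0..T} (\<lambda>t. (f (x t) - f (y t))^2) \<le> integral {0..T} (\<lambda>t. (x t - y t)^2)"
  proof (rule integral_le)
    show "(\<lambda>t. (f (x t) - f (y t))^2) integrable_on {0..T}"
      by (intro integrable_continuous_interval continuous_intros
            continuous_on_compose2[OF f_cont] x_cont y_cont) auto
    show "(\<lambda>t. (x t - y t)^2) integrable_on {0..T}"
      by (intro integrable_continuous_interval continuous_intros x_cont y_cont)
    show "(f (x t) - f (y t))^2 \<le> (x t - y t)^2" for t
      using lip by (simp add: abs_le_square_iff)
  qed
  then show ?thesis unfolding l2norm_def by simp
qed

lemma dL2_nonneg: "(\<And>i. 0 \<le> bs i) \<Longrightarrow> 0 \<le> dL2 T f bs u v"
  unfolding dL2_def by (intro infsum_nonneg mult_nonneg_nonneg l2norm_nonneg)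

definition uniform_window :: "nat \<Rightarrow> int measure" where
  "uniform_window n = point_measure {- int n..int n} (\<lambda>_. ennreal (1 / real (2 * n + 1)))"

lemma prob_space_uniform_window: "prob_space (uniform_window n)"
  unfolding uniform_window_def
proof (rule prob_space_point_measure)
  let ?N = "real (2 * n + 1)"
  have "(\<Sum>i\<in>{- int n..int n}. ennreal (1 / ?N)) = of_nat (2 * n + 1) * ennreal (1 / ?N)"
    by (simp add: nat_add_distrib nat_mult_distrib)
  also have "\<dots> = ennreal ?N * ennreal (1 / ?N)"
    by (simp only: ennreal_of_nat_eq_real_of_nat)
  also have "\<dots> = ennreal (?N * (1 / ?N))"
    by (rule ennreal_mult[symmetric]) simp_all
  finally show "(\<Sum>i\<in>{- int n..int n}. ennreal (1 / ?N)) = 1" by simp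
qed auto

lemma empirical_eq_distr_uniform_window:
  assumes "\<forall>k\<in>{- int n..int n}. u k \<in> CT T"
  shows "empirical T n u = distr (uniform_window n) (TZ T) (\<lambda>i. shift i (perext n u))"
    (is "_ = ?D")
proof -
  let ?I = "{- int n..int n}" and ?N = "real (2 * n + 1)" and ?q = "\<lambda>i. shift i (perext n u)"
  have q_meas: "?q \<in> measurable (uniform_window n) (TZ T)"
    using shift_perext_in_space_TZ[OF assms] by (simp add: uniform_window_def)
  have "?D = measure_of (space (TZ T)) (sets (TZ T)) (emeasure ?D)"
    using measure_of_of_measure[of ?D] by simp
  also have "\<dots> = empirical T n u"
    unfolding empirical_def
  proof (rule measure_of_eq)
    show "sets (TZ T) \<subseteq> Pow (space (TZ T))" by (auto dest: sets.sets_into_space)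
    fix A assume "A \<in> sigma_sets (space (TZ T)) (sets (TZ T))"
    then have A: "A \<in> sets (TZ T)" by (simp add: sets.sigma_sets_eq)
    have "emeasure ?D A = emeasure (uniform_window n) (?q -` A \<inter> ?I)"
      using q_meas A by (simp add: emeasure_distr uniform_window_def space_point_measure)
    also have "\<dots> = (\<Sum>i\<in>?q -` A \<inter> ?I. ennreal (1 / ?N))"
      unfolding uniform_window_def by (rule emeasure_point_measure_finite) auto
    also have "\<dots> = (\<Sum>i\<in>?I. indicator A (?q i) * ennreal (1 / ?N))"
      by (simp add: sum.If_cases indicator_def Int_commute vimage_def)
    also have "\<dots> = (\<Sum>i\<in>?I. indicator A (?q i)) / ennreal ?N"
      by (simp add: sum_distrib_right divide_ennreal_def ennreal_inverse_positive
          divide_ennreal[symmetric] ennreal_divide_times)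
    finally show "emeasure ?D A = (\<Sum>i\<in>?I. indicator A (?q i)) / ennreal ?N" .
  qed
  finally show ?thesis by simp
qed

lemma coupling_empirical_diagonal:
  assumes "\<forall>k\<in>{- int n..int n}. X k \<in> CT T" "\<forall>k\<in>{- int n..int n}. Y k \<in> CT T"
  shows "coupling (TZ T) (empirical T n X) (empirical T n Y)
    (distr (uniform_window n) (TZ T \<Otimes>\<^sub>M TZ T) (\<lambda>i. (shift i (perext n X), shift i (perext n Y))))"
  unfolding coupling_def
proof (intro conjI)
  let ?p = "\<lambda>i. (shift i (perext n X), shift i (perext n Y))"
  have p_meas: "?p \<in> measurable (uniform_window n) (TZ T \<Otimes>\<^sub>M TZ T)"
    using shift_perext_in_space_TZ[OF assms(1)] shift_perext_in_space_TZ[OF assms(2)]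
    by (auto simp: uniform_window_def space_pair_measure)
  show "prob_space (distr (uniform_window n) (TZ T \<Otimes>\<^sub>M TZ T) ?p)"
    by (rule prob_space.prob_space_distr[OF prob_space_uniform_window p_meas])
  show "distr (distr (uniform_window n) (TZ T \<Otimes>\<^sub>M TZ T) ?p) (TZ T) fst = empirical T n X"
    by (simp add: distr_distr[OF measurable_fst p_meas] comp_def
        empirical_eq_distr_uniform_window[OF assms(1)])
  show "distr (distr (uniform_window n) (TZ T \<Otimes>\<^sub>M TZ T) ?p) (TZ T) snd = empirical T n Y"
    by (simp add: distr_distr[OF measurable_snd p_meas] comp_def
        empirical_eq_distr_uniform_window[OF assms(2)])
qed simp

lemma DTL2_empirical_le:
  assumes "\<And>i. 0 \<le> bs i"
    and "\<forall>k\<in>{- int n..int n}. X k \<in> CT T" "\<forall>k\<in>{- int n..int n}. Y k \<in> CT T"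
  shows "DTL2 T f bs (empirical T n X) (empirical T n Y)
    \<le> ennreal ((\<Sum>i\<in>{- int n..int n}. dL2 T f bs (shift i (perext n X)) (shift i (perext n Y)))
                / real (2 * n + 1))"
proof -
  let ?I = "{- int n..int n}" and ?N = "real (2 * n + 1)"
  let ?p = "\<lambda>i. (shift i (perext n X), shift i (perext n Y))"
  let ?d = "\<lambda>i. dL2 T f bs (shift i (perext n X)) (shift i (perext n Y))"
  have d_nonneg: "0 \<le> ?d i" for i by (rule dL2_nonneg[OF assms(1)])
  have "DTL2 T f bs (empirical T n X) (empirical T n Y)
      \<le> (\<integral>\<^sup>+ p. ennreal (dL2 T f bs (fst p) (snd p))
           \<partial>distr (uniform_window n) (TZ T \<Otimes>\<^sub>M TZ T) ?p)"
    unfolding DTL2_def using coupling_empirical_diagonal[OF assms(2,3)] by (intro Inf_lower) blast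
  also have "\<dots> \<le> (\<Sum>i\<in>?I. ennreal (1 / ?N) * ennreal (?d i))"
    unfolding uniform_window_def
    using shift_perext_in_space_TZ[OF assms(2)] shift_perext_in_space_TZ[OF assms(3)]
    by (intro order_trans[OF nn_integral_distr_point_measure_le]) (auto simp: space_pair_measure)
  also have "\<dots> = ennreal (\<Sum>i\<in>?I. ?d i / ?N)"
    using d_nonneg by (simp add: sum_ennreal ennreal_mult[symmetric])
  finally show ?thesis by (simp add: sum_divide_distrib)
qed

lemma summable_on_mult_modI:
  fixes bs :: "int \<Rightarrow> real"
  assumes "bs summable_on UNIV" "\<And>j. 0 \<le> bs j" "\<And>k. 0 \<le> a k"
  shows "(\<lambda>j. bs j * a (modI n (i + j))) summable_on UNIV"
proof (rule summable_on_comparison_test)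
  let ?M = "\<Sum>k\<in>{- int n..int n}. a k"
  show "(\<lambda>j. bs j * ?M) summable_on UNIV" using assms(1) by (rule summable_on_cmult_left)
  have "a (modI n (i + j)) \<le> ?M" for j
    using modI_mem assms(3) by (intro member_le_sum) auto
  then show "bs j * a (modI n (i + j)) \<le> bs j * ?M" for j
    using assms(2) by (simp add: mult_left_mono)
  show "0 \<le> bs j * a (modI n (i + j))" for j
    using assms(2,3) by simp
qed

lemma dL2_shift_perext_le:
  assumes lip: "\<forall>x y. \<bar>f x - f y\<bar> \<le> \<bar>x - y\<bar>"
    and bs: "bs summable_on UNIV" "\<And>j. 0 \<le> bs j"
    and X: "\<forall>k\<in>{- int n..int n}. X k \<in> CT T" and Y: "\<forall>k\<in>{- int n..int n}. Y k \<in> CT T"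
  shows "dL2 T f bs (shift i (perext n X)) (shift i (perext n Y))
    \<le> (\<Sum>\<^sub>\<infinity>j. bs j * l2norm T (\<lambda>t. X (modI n (i + j)) t - Y (modI n (i + j)) t))"
proof -
  let ?a = "\<lambda>k. l2norm T (\<lambda>t. X k t - Y k t)"
  let ?c = "\<lambda>j. l2norm T (\<lambda>t. f (X (modI n (i + j)) t) - f (Y (modI n (i + j)) t))"
  have c_le: "?c j \<le> ?a (modI n (i + j))" for j
    using X Y modI_mem by (intro l2norm_lipschitz_le[OF lip]) auto
  have a_summable: "(\<lambda>j. bs j * ?a (modI n (i + j))) summable_on UNIV"
    by (rule summable_on_mult_modI[OF bs l2norm_nonneg])
  have c_summable: "(\<lambda>j. bs j * ?c j) summable_on UNIV"
    by (rule summable_on_comparison_test[OF a_summable])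
       (use c_le bs(2) l2norm_nonneg in \<open>auto intro: mult_left_mono\<close>)
  show ?thesis
    unfolding dL2_def shift_perext_apply
    by (rule infsum_mono[OF c_summable a_summable]) (use c_le bs(2) in \<open>auto intro: mult_left_mono\<close>)
qed

lemma sum_dL2_shift_perext_le:
  assumes lip: "\<forall>x y. \<bar>f x - f y\<bar> \<le> \<bar>x - y\<bar>"
    and bs: "bs summable_on UNIV" "\<And>j. 0 \<le> bs j"
    and X: "\<forall>k\<in>{- int n..int n}. X k \<in> CT T" and Y: "\<forall>k\<in>{- int n..int n}. Y k \<in> CT T"
  shows "(\<Sum>i\<in>{- int n..int n}. dL2 T f bs (shift i (perext n X)) (shift i (perext n Y)))
    \<le> (\<Sum>\<^sub>\<infinity>j. bs j) * (\<Sum>k\<in>{- int n..int n}. l2norm T (\<lambda>t. X k t - Y k t))"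
proof -
  let ?I = "{- int n..int n}" and ?a = "\<lambda>k. l2norm T (\<lambda>t. X k t - Y k t)"
  have "(\<Sum>i\<in>?I. dL2 T f bs (shift i (perext n X)) (shift i (perext n Y)))
      \<le> (\<Sum>i\<in>?I. \<Sum>\<^sub>\<infinity>j. bs j * ?a (modI n (i + j)))"
    by (intro sum_mono dL2_shift_perext_le[OF lip bs X Y])
  also have "\<dots> = (\<Sum>\<^sub>\<infinity>j. \<Sum>i\<in>?I. bs j * ?a (modI n (i + j)))"
    using summable_on_mult_modI[OF bs, of ?a] by (intro infsum_sum[symmetric]) (simp_all add: l2norm_nonneg)
  also have "\<dots> = (\<Sum>\<^sub>\<infinity>j. bs j * (\<Sum>k\<in>?I. ?a k))"
    by (simp add: sum_distrib_left[symmetric] sum_modI_add[of ?a n])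
  also have "\<dots> = (\<Sum>\<^sub>\<infinity>j. bs j) * (\<Sum>k\<in>?I. ?a k)"
    by (rule infsum_cmult_left')
  finally show ?thesis .
qed

lemma power2_div_card_le:
  fixes a :: "'a \<Rightarrow> real"
  assumes "0 \<le> D" "D \<le> b * (\<Sum>k\<in>I. a k)"
  shows "(D / card I)^2 \<le> b^2 / card I * (\<Sum>k\<in>I. (a k)^2)"
proof -
  have "(D / card I)^2 \<le> b^2 * (\<Sum>k\<in>I. a k)^2 / (card I)^2"
    using assms by (simp add: power_mono divide_right_mono flip: power_mult_distrib power_divide)
  also have "\<dots> \<le> b^2 * ((\<Sum>k\<in>I. (a k)^2) * card I) / (card I)^2"
    by (intro divide_right_mono mult_left_mono sum_squared_le_sum_of_squares) auto
  also have "\<dots> = b^2 / card I * (\<Sum>k\<in>I. (a k)^2)"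
    by (simp add: power2_eq_square)
  finally show ?thesis .
qed

theorem lemma3p17:
  fixes T :: real and f :: "real \<Rightarrow> real" and bs :: "int \<Rightarrow> real" and n :: nat
    and X Y :: "int \<Rightarrow> real \<Rightarrow> real"
  assumes "T > 0"
    and "\<forall>x. f x \<in> {0..1}"
    and "\<forall>x y. \<bar>f x - f y\<bar> \<le> \<bar>x - y\<bar>"
    and "\<forall>i. bs i > 0"
    and "bs summable_on UNIV"
    and "\<forall>k\<in>{- int n..int n}. X k \<in> CT T"
    and "\<forall>k\<in>{- int n..int n}. Y k \<in> CT T"
  shows "(DTL2 T f bs (empirical T n X) (empirical T n Y))^2
           \<le> ennreal ((\<Sum>\<^sub>\<infinity>i\<in>UNIV. bs i)^2 / real (2 * n + 1)
                * (\<Sum>k\<in>{- int n..int n}. (l2norm T (\<lambda>t. X k t - Y k t))^2))"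
proof -
  let ?I = "{- int n..int n}" and ?N = "real (2 * n + 1)"
  let ?D = "\<Sum>i\<in>?I. dL2 T f bs (shift i (perext n X)) (shift i (perext n Y))"
  have bs_nonneg: "0 \<le> bs j" for j using assms(4) by (simp add: less_imp_le)
  have D_nonneg: "0 \<le> ?D" by (intro sum_nonneg dL2_nonneg bs_nonneg)
  have "(DTL2 T f bs (empirical T n X) (empirical T n Y))^2 \<le> (ennreal (?D / ?N))^2"
    using DTL2_empirical_le[where bs=bs, OF bs_nonneg assms(6,7)] by (rule power_mono) simp
  also have "\<dots> = ennreal ((?D / ?N)^2)"
    using D_nonneg by (simp add: ennreal_power)
  also have "\<dots> \<le> ennreal ((\<Sum>\<^sub>\<infinity>i. bs i)^2 / ?N * (\<Sum>k\<in>?I. (l2norm T (\<lambda>t. X k t - Y k t))^2))"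
    using power2_div_card_le[OF D_nonneg sum_dL2_shift_perext_le[OF assms(3,5) bs_nonneg assms(6,7)]]
    by (intro ennreal_leI) (simp add: add.commute)
  finally show ?thesis .
qed

end
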